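(* Let $\lambda$ be an uncountable regular cardinal, and suppose $S=\langle I\times\kappa,\mathcal{R}\rangle$ is a $\lambda$-system with no cofinal branch. Suppose $\mathrm{width}(S)=\kappa'$. Then there is a $\lambda$-system $S'=\langle I\times\kappa',\mathcal{R}'\rangle$ with no cofinal branch such that $|\mathcal{R}'|=1$.
   Context: A binary relation $R$ is tree-like if whenever $a<_Rc$ and $b<_Rc$, then $a,b$ are $R$-comparable ($a=b$, $a<_Rb$ or $b<_Ra$). For a cardinal $0<\kappa<\lambda$, a $\lambda$-system $\langle I\times\kappa,\mathcal{R}\rangle$ consists of an unbounded $I\subseteq\lambda$ (levels $S_\alpha=\{\alpha\}\times\kappa$, $\alpha\in I$) and a set $\mathcal{R}$ of binary, transitive, tree-like relations on $I\times\kappa$ with $0<|\mathcal{R}|<\lambda$, such that if $(\alpha_0,\beta_0)<_R(\alpha_1,\beta_1)$ for $R\in\mathcal{R}$ then $\alpha_0<\alpha_1$, and for all $\alpha_0<\alpha_1$ in $I$ there are $\beta_0,\beta_1<\kappa$ and $R\in\mathcal{R}$ with $(\alpha_0,\beta_0)<_R(\alpha_1,\beta_1)$. $\mathrm{width}(S)=\max(\kappa,|\mathcal{R}|)$. A branch through $R\in\mathcal{R}$ is a set of pairwise $R$-comparable elements; it is cofinal if it meets $S_\alpha$ for unboundedly many $\alpha\in I$; $S$ has a cofinal branch if some $R\in\mathcal{R}$ has a cofinal branch. *)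

theory Defs
  imports Main
begin

text \<open>Cardinals are represented by cardinal orders (library: Card_order,
card_of, ordLess2, ordLeq2, ordIso2, regularCard). The cardinal lambda is a
cardinal well-order lam; its ordinals are the elements of Field lam, with
non-strict order lam. A cardinal kappa is represented by a set K of
cardinality kappa; levels are {alpha} \<times> K.\<close>

definition tree_like :: "'b rel \<Rightarrow> bool" where
  "tree_like R \<longleftrightarrow> (\<forall>a b c. (a, c) \<in> R \<and> (b, c) \<in> R \<longrightarrow> a = b \<or> (a, b) \<in> R \<or> (b, a) \<in> R)"

definition unbounded_in :: "'a rel \<Rightarrow> 'a set \<Rightarrow> bool" where
  "unbounded_in lam I \<longleftrightarrow> I \<subseteq> Field lam \<and> (\<forall>\<alpha>\<in>Field lam. \<exists>\<beta>\<in>I. (\<alpha>, \<beta>) \<in> lam)"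

definition lambda_system ::
  "'a rel \<Rightarrow> 'a set \<Rightarrow> 'k set \<Rightarrow> (('a \<times> 'k) rel) set \<Rightarrow> bool" where
  "lambda_system lam I K Rs \<longleftrightarrow>
     unbounded_in lam I \<and>
     K \<noteq> {} \<and> ordLess2 (card_of K) lam \<and>
     Rs \<noteq> {} \<and> ordLess2 (card_of Rs) lam \<and>
     (\<forall>R\<in>Rs. R \<subseteq> (I \<times> K) \<times> (I \<times> K) \<and> trans R \<and> tree_like R \<and>
        (\<forall>a0 b0 a1 b1. ((a0, b0), (a1, b1)) \<in> R \<longrightarrow> (a0, a1) \<in> lam \<and> a0 \<noteq> a1)) \<and>
     (\<forall>\<alpha>0\<in>I. \<forall>\<alpha>1\<in>I. (\<alpha>0, \<alpha>1) \<in> lam \<and> \<alpha>0 \<noteq> \<alpha>1 \<longrightarrow>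
        (\<exists>\<beta>0\<in>K. \<exists>\<beta>1\<in>K. \<exists>R\<in>Rs. ((\<alpha>0, \<beta>0), (\<alpha>1, \<beta>1)) \<in> R))"

definition is_branch :: "('a \<times> 'k) rel \<Rightarrow> ('a \<times> 'k) set \<Rightarrow> bool" where
  "is_branch R B \<longleftrightarrow> (\<forall>x\<in>B. \<forall>y\<in>B. x = y \<or> (x, y) \<in> R \<or> (y, x) \<in> R)"

definition cofinal_branch ::
  "'a rel \<Rightarrow> 'a set \<Rightarrow> 'k set \<Rightarrow> ('a \<times> 'k) rel \<Rightarrow> ('a \<times> 'k) set \<Rightarrow> bool" where
  "cofinal_branch lam I K R B \<longleftrightarrow> B \<subseteq> I \<times> K \<and> is_branch R B \<and>
     unbounded_in lam {\<alpha> \<in> I. \<exists>\<beta>. (\<alpha>, \<beta>) \<in> B}"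

definition has_cofinal_branch ::
  "'a rel \<Rightarrow> 'a set \<Rightarrow> 'k set \<Rightarrow> (('a \<times> 'k) rel) set \<Rightarrow> bool" where
  "has_cofinal_branch lam I K Rs \<longleftrightarrow> (\<exists>R\<in>Rs. \<exists>B. cofinal_branch lam I K R B)"

text \<open>width(S) = max(|K|, |Rs|), compared as cardinals.\<close>
definition has_width :: "'k set \<Rightarrow> (('a \<times> 'k) rel) set \<Rightarrow> 'c set \<Rightarrow> bool" where
  "has_width K Rs K' \<longleftrightarrow>
     (ordLeq2 (card_of Rs) (card_of K) \<longrightarrow> ordIso2 (card_of K') (card_of K)) \<and>
     (ordLeq2 (card_of K) (card_of Rs) \<longrightarrow> ordIso2 (card_of K') (card_of Rs))"

end

theory Submission
  imports Defs
begin

text \<open>A system of finite width has a cofinal branch. Take an ultrafilter \<open>U\<close> on \<open>I\<close> containing all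
final segments. For \<open>\<alpha> \<in> I\<close>, almost every level \<open>\<beta>\<close> above \<open>\<alpha>\<close> carries some \<open>(\<alpha>, b0) <\<^sub>R (\<beta>, b1)\<close>;
as there are only finitely many triples \<open>(b0, R, b1)\<close>, one of them works for almost every \<open>\<beta>\<close>, and
one triple is chosen in this way by almost every \<open>\<alpha>\<close>. For two such \<open>\<alpha>\<close> the nodes \<open>(\<alpha>, b0)\<close> have a
common \<open>R\<close>-successor, so they are \<open>R\<close>-comparable by tree-likeness and form a cofinal branch.
Hence the width \<open>\<kappa>'\<close> is infinite and \<open>\<kappa>' = |K \<times> Rs|\<close>. Indexing the levels by \<open>K \<times> Rs\<close>, the disjoint
sum of copies of all \<open>R \<in> Rs\<close> is a single relation, and each of its branches stays inside one copy.\<close>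

definition ultrafilter :: "'a filter \<Rightarrow> bool" where
  "ultrafilter U \<longleftrightarrow> U \<noteq> bot \<and> (\<forall>P. eventually P U \<or> eventually (\<lambda>x. \<not> P x) U)"

lemma Inf_chain_ne_bot:
  fixes C :: "'a filter set"
  assumes "C \<noteq> {}" and "bot \<notin> C" and chain: "\<And>G H. G \<in> C \<Longrightarrow> H \<in> C \<Longrightarrow> G \<le> H \<or> H \<le> G"
  shows "Inf C \<noteq> bot"
proof -
  have "\<not> eventually (\<lambda>_. False) (Inf C)"
  proof (subst eventually_Inf_base)
    show "\<exists>x\<in>C. x \<le> inf G H" if "G \<in> C" "H \<in> C" for G H
      using chain[OF that] that by (metis inf.absorb1 inf.absorb2 order_refl)
  qed (use assms in \<open>auto simp: eventually_False\<close>)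
  then show ?thesis by auto
qed

lemma exists_ultrafilter_le:
  fixes F :: "'a filter"
  assumes "F \<noteq> bot"
  shows "\<exists>U\<le>F. ultrafilter U"
proof -
  define A where "A = {G. G \<le> F \<and> G \<noteq> bot}"
  have po: "partial_order_on A (relation_of (\<ge>) A)"
    by (rule partial_order_on_relation_ofI) (simp, metis order_trans, metis order_antisym)
  have "\<exists>U\<in>A. \<forall>G\<in>C. U \<le> G" if C: "C \<in> Chains (relation_of (\<ge>) A)" for C
  proof (cases "C = {}")
    case True
    then show ?thesis using assms unfolding A_def by auto
  next
    case False
    have "C \<subseteq> A" using C by (rule Chains_relation_of)
    moreover have "G \<le> H \<or> H \<le> G" if "G \<in> C" "H \<in> C" for G H
      using C that unfolding Chains_def relation_of_def by auto
    ultimately have "Inf C \<noteq> bot"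
      using False Inf_chain_ne_bot[of C] unfolding A_def by blast
    moreover obtain G0 where "G0 \<in> C" using False by blast
    moreover have "Inf C \<le> G0" using \<open>G0 \<in> C\<close> by (rule Inf_lower)
    ultimately have "Inf C \<in> A"
      using \<open>C \<subseteq> A\<close> order.trans[OF \<open>Inf C \<le> G0\<close>] unfolding A_def by blast
    then show ?thesis by (blast intro: Inf_lower)
  qed
  then obtain U where U: "U \<in> A" and max: "\<And>G. G \<in> A \<Longrightarrow> G \<le> U \<Longrightarrow> G = U"
    using predicate_Zorn[OF po] by blast
  have "eventually P U \<or> eventually (\<lambda>x. \<not> P x) U" for P
  proof (rule ccontr)
    assume neither: "\<not> ?thesis"
    define G where "G = inf U (principal {x. P x})"
    have "G \<noteq> bot"
    proof
      assume "G = bot"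
      then have "eventually (\<lambda>_. False) G" by simp
      with neither show False unfolding G_def by (simp add: eventually_inf_principal)
    qed
    moreover have "G \<le> U" unfolding G_def by simp
    ultimately have "G \<in> A" using U order.trans[OF \<open>G \<le> U\<close>] unfolding A_def by blast
    then have "G = U" using \<open>G \<le> U\<close> by (rule max)
    moreover have "eventually P G" unfolding G_def eventually_inf_principal by simp
    ultimately have "eventually P U" by simp
    with neither show False by blast
  qed
  with U show ?thesis unfolding A_def ultrafilter_def by blast
qed

lemma ultrafilter_finite_Bex:
  assumes "ultrafilter U" and "finite C" and "eventually (\<lambda>x. \<exists>c\<in>C. P c x) U"
  shows "\<exists>c\<in>C. eventually (P c) U"
  using assms(2,3)
proof (induction C rule: finite_induct)
  case empty
  then show ?case using assms(1) unfolding ultrafilter_def by simp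
next
  case (insert c C)
  show ?case
  proof (cases "eventually (P c) U")
    case False
    then have "eventually (\<lambda>x. \<not> P c x) U" using assms(1) unfolding ultrafilter_def by blast
    with insert.prems have "eventually (\<lambda>x. \<exists>c\<in>C. P c x) U"
      by eventually_elim auto
    with insert.IH show ?thesis by blast
  qed auto
qed

definition tail_filter :: "'a rel \<Rightarrow> 'a set \<Rightarrow> 'a filter" where
  "tail_filter lam I = (INF \<alpha>\<in>Field lam. principal (I \<inter> aboveS lam \<alpha>))"

lemma eventually_tail_filter:
  "\<alpha> \<in> Field lam \<Longrightarrow> eventually (\<lambda>\<beta>. \<beta> \<in> I \<and> \<beta> \<in> aboveS lam \<alpha>) (tail_filter lam I)"
  unfolding tail_filter_def by (rule eventually_INF1) (auto simp: eventually_principal)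

lemma tail_filter_ne_bot:
  assumes co: "Card_order lam" and inf: "infinite (Field lam)" and unb: "unbounded_in lam I"
  shows "tail_filter lam I \<noteq> bot"
proof -
  have wo: "wo_rel lam" using co card_order_on_well_order_on unfolding wo_rel_def by blast
  note TRANS = wo_rel.TRANS[OF wo] and ANTISYM = wo_rel.ANTISYM[OF wo]
  have directed: "\<exists>\<gamma>\<in>Field lam. principal (I \<inter> aboveS lam \<gamma>) \<le>
      inf (principal (I \<inter> aboveS lam \<alpha>)) (principal (I \<inter> aboveS lam \<alpha>'))"
    if "\<alpha> \<in> Field lam" "\<alpha>' \<in> Field lam" for \<alpha> \<alpha>'
  proof (intro bexI)
    have "aboveS lam (wo_rel.max2 lam \<alpha> \<alpha>') \<subseteq> aboveS lam \<alpha> \<inter> aboveS lam \<alpha>'"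
      using wo_rel.max2_greater[OF wo that] TRANS ANTISYM
      unfolding aboveS_def by (auto dest: transD antisymD)
    then show "principal (I \<inter> aboveS lam (wo_rel.max2 lam \<alpha> \<alpha>')) \<le>
        inf (principal (I \<inter> aboveS lam \<alpha>)) (principal (I \<inter> aboveS lam \<alpha>'))" by auto
    show "wo_rel.max2 lam \<alpha> \<alpha>' \<in> Field lam" using wo_rel.max2_among[OF wo that] that by auto
  qed
  have nonempty: "I \<inter> aboveS lam \<alpha> \<noteq> {}" if \<alpha>: "\<alpha> \<in> Field lam" for \<alpha>
  proof -
    obtain \<alpha>' where \<alpha>': "\<alpha>' \<in> Field lam" "\<alpha> \<noteq> \<alpha>'" "(\<alpha>, \<alpha>') \<in> lam"
      using infinite_Card_order_limit[OF co inf \<alpha>] by blast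
    then obtain \<beta> where "\<beta> \<in> I" "(\<alpha>', \<beta>) \<in> lam" using unb unfolding unbounded_in_def by blast
    with \<alpha>' have "\<beta> \<in> I \<inter> aboveS lam \<alpha>"
      using TRANS ANTISYM unfolding aboveS_def by (auto dest: transD antisymD)
    then show ?thesis by blast
  qed
  have "Field lam \<noteq> {}" using inf by auto
  moreover have "\<not> eventually (\<lambda>_. False) (principal (I \<inter> aboveS lam \<alpha>))"
    if "\<alpha> \<in> Field lam" for \<alpha>
    using nonempty[OF that] by (auto simp: eventually_principal)
  ultimately have "\<not> eventually (\<lambda>_. False) (tail_filter lam I)"
    unfolding tail_filter_def by (subst eventually_INF_base) (use directed in auto)
  then show ?thesis by auto
qed

lemma unbounded_in_if_frequently_tail:
  assumes "X \<subseteq> Field lam" and "\<exists>\<^sub>F \<alpha> in tail_filter lam I. \<alpha> \<in> X"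
  shows "unbounded_in lam X"
  unfolding unbounded_in_def
proof (intro conjI ballI)
  fix \<delta> assume "\<delta> \<in> Field lam"
  then have "\<exists>\<^sub>F \<alpha> in tail_filter lam I. \<alpha> \<in> X \<and> \<alpha> \<in> I \<and> \<alpha> \<in> aboveS lam \<delta>"
    using frequently_eventually_frequently[OF assms(2) eventually_tail_filter] by simp
  then show "\<exists>\<beta>\<in>X. (\<delta>, \<beta>) \<in> lam" by (auto simp: aboveS_def elim: frequentlyE)
qed (use assms(1) in simp)

lemma lambda_systemD:
  assumes "lambda_system lam I K Rs"
  shows "unbounded_in lam I" and "K \<noteq> {}" and "ordLess2 (card_of K) lam"
    and "Rs \<noteq> {}" and "ordLess2 (card_of Rs) lam"
    and "\<And>R. R \<in> Rs \<Longrightarrow> R \<subseteq> (I \<times> K) \<times> (I \<times> K)"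
    and "\<And>R. R \<in> Rs \<Longrightarrow> trans R"
    and "\<And>R. R \<in> Rs \<Longrightarrow> tree_like R"
    and "\<And>R a0 b0 a1 b1. R \<in> Rs \<Longrightarrow> ((a0, b0), (a1, b1)) \<in> R \<Longrightarrow> (a0, a1) \<in> lam \<and> a0 \<noteq> a1"
    and "\<And>\<alpha>0 \<alpha>1. \<alpha>0 \<in> I \<Longrightarrow> \<alpha>1 \<in> I \<Longrightarrow> (\<alpha>0, \<alpha>1) \<in> lam \<Longrightarrow> \<alpha>0 \<noteq> \<alpha>1 \<Longrightarrow>
           \<exists>\<beta>0\<in>K. \<exists>\<beta>1\<in>K. \<exists>R\<in>Rs. ((\<alpha>0, \<beta>0), (\<alpha>1, \<beta>1)) \<in> R"
  using assms unfolding lambda_system_def by blast+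

lemma frequently_if_eventually_le:
  assumes "U \<noteq> bot" and "U \<le> F" and "eventually P U"
  shows "frequently P F"
  unfolding frequently_def
proof
  assume "eventually (\<lambda>x. \<not> P x) F"
  with filter_leD[OF assms(2)] have "eventually (\<lambda>x. \<not> P x) U" by blast
  with assms(3) have "eventually (\<lambda>_. False) U" by eventually_elim simp
  with assms(1) show False by simp
qed

lemma ultrafilter_cofinal_branch:
  assumes U: "ultrafilter U" "U \<le> tail_filter lam I" and "I \<subseteq> Field lam"
    and "tree_like R" and "b0 \<in> K"
    and X: "X \<subseteq> I" "eventually (\<lambda>\<alpha>. \<alpha> \<in> X) U"
    and above: "\<And>\<alpha>. \<alpha> \<in> X \<Longrightarrow> eventually (\<lambda>\<gamma>. ((\<alpha>, b0), (\<gamma>, b1)) \<in> R) U"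
  shows "cofinal_branch lam I K R ((\<lambda>\<alpha>. (\<alpha>, b0)) ` X)"
  unfolding cofinal_branch_def
proof (intro conjI)
  have "U \<noteq> bot" using U(1) unfolding ultrafilter_def by blast
  show "(\<lambda>\<alpha>. (\<alpha>, b0)) ` X \<subseteq> I \<times> K" using X(1) \<open>b0 \<in> K\<close> by auto
  have "{\<alpha> \<in> I. \<exists>\<beta>. (\<alpha>, \<beta>) \<in> (\<lambda>\<alpha>. (\<alpha>, b0)) ` X} = X" using X(1) by auto
  moreover have "unbounded_in lam X"
  proof (rule unbounded_in_if_frequently_tail)
    show "X \<subseteq> Field lam" using X(1) \<open>I \<subseteq> Field lam\<close> by blast
    show "\<exists>\<^sub>F \<alpha> in tail_filter lam I. \<alpha> \<in> X"
      using frequently_if_eventually_le[OF \<open>U \<noteq> bot\<close> U(2) X(2)] .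
  qed
  ultimately show "unbounded_in lam {\<alpha> \<in> I. \<exists>\<beta>. (\<alpha>, \<beta>) \<in> (\<lambda>\<alpha>. (\<alpha>, b0)) ` X}" by simp
  show "is_branch R ((\<lambda>\<alpha>. (\<alpha>, b0)) ` X)" unfolding is_branch_def
  proof (intro ballI)
    fix x y assume "x \<in> (\<lambda>\<alpha>. (\<alpha>, b0)) ` X" "y \<in> (\<lambda>\<alpha>. (\<alpha>, b0)) ` X"
    then obtain \<alpha> \<alpha>' where xy: "x = (\<alpha>, b0)" "y = (\<alpha>', b0)" "\<alpha> \<in> X" "\<alpha>' \<in> X" by blast
    from eventually_happens'[OF \<open>U \<noteq> bot\<close> eventually_conj[OF above[OF xy(3)] above[OF xy(4)]]]
    obtain \<gamma> where "((\<alpha>, b0), (\<gamma>, b1)) \<in> R" "((\<alpha>', b0), (\<gamma>, b1)) \<in> R" by blast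
    with \<open>tree_like R\<close> show "x = y \<or> (x, y) \<in> R \<or> (y, x) \<in> R"
      unfolding tree_like_def xy by blast
  qed
qed

lemma finite_lambda_system_has_cofinal_branch:
  fixes lam :: "'a rel" and K :: "'k set" and Rs :: "(('a \<times> 'k) rel) set"
  assumes co: "Card_order lam" and inf: "infinite (Field lam)"
    and sys: "lambda_system lam I K Rs" and "finite K" and "finite Rs"
  shows "has_cofinal_branch lam I K Rs"
proof -
  have unb: "unbounded_in lam I" by (rule lambda_systemD(1)[OF sys])
  then have IF: "I \<subseteq> Field lam" unfolding unbounded_in_def by blast
  obtain U where U: "ultrafilter U" "U \<le> tail_filter lam I"
    using exists_ultrafilter_le[OF tail_filter_ne_bot[OF co inf unb]] by blast
  have eventually_above: "eventually (\<lambda>\<beta>. \<beta> \<in> I \<and> \<beta> \<in> aboveS lam \<alpha>) U" if "\<alpha> \<in> Field lam" for \<alpha>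
    using filter_leD[OF U(2) eventually_tail_filter[OF that]] .
  define C where "C = K \<times> Rs \<times> K"
  have "finite C" unfolding C_def using assms(4,5) by simp
  \<comment> \<open>\<open>link \<alpha> (b0, R, b1) \<beta>\<close> says \<open>(\<alpha>, b0) <\<^sub>R (\<beta>, b1)\<close>.\<close>
  define link where "link \<alpha> c \<beta> \<longleftrightarrow> ((\<alpha>, fst c), (\<beta>, snd (snd c))) \<in> fst (snd c)"
    for \<alpha> \<beta> and c :: "'k \<times> ('a \<times> 'k) rel \<times> 'k"
  have "\<exists>c\<in>C. eventually (link \<alpha> c) U" if \<alpha>: "\<alpha> \<in> I" for \<alpha>
  proof (rule ultrafilter_finite_Bex[OF U(1) \<open>finite C\<close>])
    show "eventually (\<lambda>\<beta>. \<exists>c\<in>C. link \<alpha> c \<beta>) U"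
      using eventually_above[OF subsetD[OF IF \<alpha>]]
    proof (rule eventually_mono)
      fix \<beta> assume "\<beta> \<in> I \<and> \<beta> \<in> aboveS lam \<alpha>"
      then obtain b0 b1 R where "b0 \<in> K" "b1 \<in> K" "R \<in> Rs" "((\<alpha>, b0), (\<beta>, b1)) \<in> R"
        using lambda_systemD(10)[OF sys \<alpha>] unfolding aboveS_def by blast
      then show "\<exists>c\<in>C. link \<alpha> c \<beta>" unfolding C_def link_def by force
    qed
  qed
  then obtain f where f: "\<And>\<alpha>. \<alpha> \<in> I \<Longrightarrow> f \<alpha> \<in> C \<and> eventually (link \<alpha> (f \<alpha>)) U"
    by metis
  obtain \<delta> where "\<delta> \<in> Field lam" using infinite_imp_nonempty[OF inf] by blast
  from eventually_above[OF this] have "eventually (\<lambda>\<alpha>. \<exists>c\<in>C. \<alpha> \<in> I \<and> f \<alpha> = c) U"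
    by (rule eventually_mono) (use f in blast)
  from ultrafilter_finite_Bex[OF U(1) \<open>finite C\<close> this]
  obtain c where "c \<in> C" and c: "eventually (\<lambda>\<alpha>. \<alpha> \<in> I \<and> f \<alpha> = c) U" by blast
  then obtain b0 R b1 where cc: "c = (b0, R, b1)" "b0 \<in> K" "R \<in> Rs" unfolding C_def by auto
  have "cofinal_branch lam I K R ((\<lambda>\<alpha>. (\<alpha>, b0)) ` {\<alpha> \<in> I. f \<alpha> = c})"
  proof (rule ultrafilter_cofinal_branch[OF U IF lambda_systemD(8)[OF sys cc(3)] cc(2)])
    show "eventually (\<lambda>\<alpha>. \<alpha> \<in> {\<alpha> \<in> I. f \<alpha> = c}) U" using c by simp
    show "eventually (\<lambda>\<gamma>. ((\<alpha>, b0), (\<gamma>, b1)) \<in> R) U" if "\<alpha> \<in> {\<alpha> \<in> I. f \<alpha> = c}" for \<alpha>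
      using that f[of \<alpha>] unfolding link_def cc by auto
  qed blast
  then show ?thesis unfolding has_cofinal_branch_def using cc by blast
qed

text \<open>The index \<open>k \<in> K'\<close> stands for the node \<open>fst (g k)\<close> of the copy of the relation \<open>snd (g k)\<close>.\<close>

definition disjoint_sum_rel :: "('c \<Rightarrow> 'k \<times> ('a \<times> 'k) rel) \<Rightarrow> 'c set \<Rightarrow> ('a \<times> 'c) rel" where
  "disjoint_sum_rel g K' = {((\<alpha>, k), (\<alpha>', k')). k \<in> K' \<and> k' \<in> K' \<and> snd (g k) = snd (g k') \<and>
     ((\<alpha>, fst (g k)), (\<alpha>', fst (g k'))) \<in> snd (g k)}"

lemma mem_disjoint_sum_rel:
  "((\<alpha>, k), (\<alpha>', k')) \<in> disjoint_sum_rel g K' \<longleftrightarrow> k \<in> K' \<and> k' \<in> K' \<and> snd (g k) = snd (g k') \<and>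
     ((\<alpha>, fst (g k)), (\<alpha>', fst (g k'))) \<in> snd (g k)"
  unfolding disjoint_sum_rel_def by simp

lemma trans_disjoint_sum_rel:
  assumes "\<And>k. k \<in> K' \<Longrightarrow> trans (snd (g k))"
  shows "trans (disjoint_sum_rel g K')"
proof (rule transI, clarify)
  fix \<alpha> k \<alpha>' k' \<alpha>'' k''
  assume "((\<alpha>, k), (\<alpha>', k')) \<in> disjoint_sum_rel g K'" "((\<alpha>', k'), (\<alpha>'', k'')) \<in> disjoint_sum_rel g K'"
  with assms show "((\<alpha>, k), (\<alpha>'', k'')) \<in> disjoint_sum_rel g K'"
    unfolding mem_disjoint_sum_rel by (metis transD)
qed

lemma tree_like_disjoint_sum_rel:
  assumes "inj_on g K'" and "\<And>k. k \<in> K' \<Longrightarrow> tree_like (snd (g k))"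
  shows "tree_like (disjoint_sum_rel g K')"
  unfolding tree_like_def
proof (intro allI impI, elim conjE)
  fix x y z assume "(x, z) \<in> disjoint_sum_rel g K'" "(y, z) \<in> disjoint_sum_rel g K'"
  moreover obtain \<alpha> k \<alpha>' k' \<alpha>'' k'' where xyz: "x = (\<alpha>, k)" "y = (\<alpha>', k')" "z = (\<alpha>'', k'')"
    by (metis prod.exhaust)
  ultimately have x: "k \<in> K'" "snd (g k) = snd (g k'')" "((\<alpha>, fst (g k)), (\<alpha>'', fst (g k''))) \<in> snd (g k'')"
    and y: "k' \<in> K'" "k'' \<in> K'" "snd (g k') = snd (g k'')"
      "((\<alpha>', fst (g k')), (\<alpha>'', fst (g k''))) \<in> snd (g k'')"
    by (auto simp: mem_disjoint_sum_rel)
  have "(\<alpha>, fst (g k)) = (\<alpha>', fst (g k')) \<or>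
      ((\<alpha>, fst (g k)), (\<alpha>', fst (g k'))) \<in> snd (g k'') \<or>
      ((\<alpha>', fst (g k')), (\<alpha>, fst (g k))) \<in> snd (g k'')"
    using assms(2)[OF y(2)] x(3) y(4) unfolding tree_like_def by blast
  moreover have "k = k'" if "fst (g k) = fst (g k')"
    using inj_onD[OF assms(1) _ x(1) y(1)] that x(2) y(3) by (simp add: prod_eq_iff)
  ultimately show "x = y \<or> (x, y) \<in> disjoint_sum_rel g K' \<or> (y, x) \<in> disjoint_sum_rel g K'"
    using x y unfolding xyz mem_disjoint_sum_rel by auto
qed

lemma lambda_system_disjoint_sum_rel:
  assumes inf: "infinite (Field lam)" and wo: "Well_order lam"
    and sys: "lambda_system lam I K Rs" and g: "bij_betw g K' (K \<times> Rs)"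
    and K': "ordLess2 (card_of K') lam"
  shows "lambda_system lam I K' {disjoint_sum_rel g K'}"
proof -
  define R' where "R' = disjoint_sum_rel g K'"
  have gin: "snd (g k) \<in> Rs" if "k \<in> K'" for k
    using bij_betwE[OF g] that by auto
  have gsurj: "\<exists>k\<in>K'. g k = (\<beta>, R)" if "\<beta> \<in> K" "R \<in> Rs" for \<beta> R
  proof -
    have "(\<beta>, R) \<in> g ` K'" using bij_betw_imp_surj_on[OF g] that by simp
    then show ?thesis by (metis imageE)
  qed
  note rel = mem_disjoint_sum_rel[of _ _ _ _ g K', folded R'_def]
  have "K' \<noteq> {}"
    using g lambda_systemD(2,4)[OF sys] unfolding bij_betw_def by auto
  moreover have "ordLess2 (card_of {R'}) lam"
    by (rule finite_ordLess_infinite[OF card_of_Well_order wo]) (simp_all add: Field_card_of inf)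
  moreover have "R' \<subseteq> (I \<times> K') \<times> (I \<times> K')"
  proof
    fix p assume "p \<in> R'"
    then obtain \<alpha> k \<alpha>' k' where "p = ((\<alpha>, k), (\<alpha>', k'))" "k \<in> K'" "k' \<in> K'"
      "((\<alpha>, fst (g k)), (\<alpha>', fst (g k'))) \<in> snd (g k)"
      unfolding R'_def disjoint_sum_rel_def by blast
    then show "p \<in> (I \<times> K') \<times> (I \<times> K')"
      using lambda_systemD(6)[OF sys gin] by blast
  qed
  moreover have "trans R'"
    unfolding R'_def by (rule trans_disjoint_sum_rel) (rule lambda_systemD(7)[OF sys gin])
  moreover have "tree_like R'"
    unfolding R'_def using bij_betw_imp_inj_on[OF g]
    by (rule tree_like_disjoint_sum_rel) (rule lambda_systemD(8)[OF sys gin])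
  moreover have "(\<alpha>0, \<alpha>1) \<in> lam \<and> \<alpha>0 \<noteq> \<alpha>1" if "((\<alpha>0, k0), (\<alpha>1, k1)) \<in> R'" for \<alpha>0 k0 \<alpha>1 k1
    using that lambda_systemD(9)[OF sys gin] unfolding rel by blast
  moreover have "\<exists>k0\<in>K'. \<exists>k1\<in>K'. ((\<alpha>0, k0), (\<alpha>1, k1)) \<in> R'"
    if lt: "\<alpha>0 \<in> I" "\<alpha>1 \<in> I" "(\<alpha>0, \<alpha>1) \<in> lam" "\<alpha>0 \<noteq> \<alpha>1" for \<alpha>0 \<alpha>1
  proof -
    obtain \<beta>0 \<beta>1 R where "\<beta>0 \<in> K" "\<beta>1 \<in> K" "R \<in> Rs" "((\<alpha>0, \<beta>0), (\<alpha>1, \<beta>1)) \<in> R"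
      using lambda_systemD(10)[OF sys lt] by blast
    moreover from this obtain k0 k1 where "k0 \<in> K'" "g k0 = (\<beta>0, R)" "k1 \<in> K'" "g k1 = (\<beta>1, R)"
      using gsurj by meson
    ultimately show ?thesis unfolding rel by (intro bexI[of _ k0] bexI[of _ k1]) auto
  qed
  ultimately show ?thesis
    using lambda_systemD(1)[OF sys] K' unfolding lambda_system_def R'_def by auto
qed

lemma cofinal_branch_disjoint_sum_rel:
  fixes lam :: "'a rel" and g :: "'c \<Rightarrow> 'k \<times> ('a \<times> 'k) rel"
  assumes "Field lam \<noteq> {}" and g: "bij_betw g K' (K \<times> Rs)"
    and B: "cofinal_branch lam I K' (disjoint_sum_rel g K') B"
  shows "has_cofinal_branch lam I K Rs"
proof -
  define R' where "R' = disjoint_sum_rel g K'"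
  define decode where "decode p = (fst p, fst (g (snd p)))" for p :: "'a \<times> 'c"
  have R'D: "snd (g (snd p)) = snd (g (snd q)) \<and> (decode p, decode q) \<in> snd (g (snd p))"
    if "(p, q) \<in> R'" for p q
    using that unfolding R'_def decode_def by (cases p, cases q) (simp add: mem_disjoint_sum_rel)
  have BI: "B \<subseteq> I \<times> K'" and branch: "is_branch R' B"
    and unb: "unbounded_in lam {\<alpha> \<in> I. \<exists>\<beta>. (\<alpha>, \<beta>) \<in> B}"
    using B unfolding cofinal_branch_def R'_def by blast+
  obtain x0 where "x0 \<in> B" using unb assms(1) unfolding unbounded_in_def by blast
  define R where "R = snd (g (snd x0))"
  have "R \<in> Rs" using bij_betwE[OF g] BI \<open>x0 \<in> B\<close> unfolding R_def by force
  have same: "snd (g (snd y)) = R" if "y \<in> B" for y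
    using branch \<open>x0 \<in> B\<close> that R'D unfolding is_branch_def R_def by metis
  have "cofinal_branch lam I K R (decode ` B)"
    unfolding cofinal_branch_def
  proof (intro conjI)
    show "decode ` B \<subseteq> I \<times> K" using BI bij_betwE[OF g] unfolding decode_def by force
    have "{\<alpha> \<in> I. \<exists>\<beta>. (\<alpha>, \<beta>) \<in> decode ` B} = {\<alpha> \<in> I. \<exists>\<beta>. (\<alpha>, \<beta>) \<in> B}"
      unfolding decode_def by force
    then show "unbounded_in lam {\<alpha> \<in> I. \<exists>\<beta>. (\<alpha>, \<beta>) \<in> decode ` B}" using unb by simp
    have decode: "(decode y, decode z) \<in> R" if "y \<in> B" "(y, z) \<in> R'" for y z
      using R'D[OF that(2)] same[OF that(1)] by metis
    show "is_branch R (decode ` B)"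
      unfolding is_branch_def
    proof (intro ballI)
      fix u v assume "u \<in> decode ` B" "v \<in> decode ` B"
      then obtain y z where "y \<in> B" "z \<in> B" "u = decode y" "v = decode z" by blast
      then show "u = v \<or> (u, v) \<in> R \<or> (v, u) \<in> R"
        using branch decode unfolding is_branch_def by metis
    qed
  qed
  with \<open>R \<in> Rs\<close> show ?thesis unfolding has_cofinal_branch_def by blast
qed

lemma has_width_ordLess:
  assumes "has_width K Rs K'" and "ordLess2 (card_of K) r" and "ordLess2 (card_of Rs) r"
  shows "ordLess2 (card_of K') r"
  using assms ordLeq_total[OF card_of_Well_order card_of_Well_order, of Rs K]
  unfolding has_width_def by (blast intro: ordIso_ordLess_trans)

lemma has_width_infinite_ordIso_Times:
  assumes "has_width K Rs K'" and "K \<noteq> {}" and "Rs \<noteq> {}" and "infinite K \<or> infinite Rs"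
  shows "ordIso2 (card_of K') (card_of (K \<times> Rs))"
proof (cases "ordLeq2 (card_of Rs) (card_of K)")
  case True
  then have "infinite K" using assms(4) card_of_ordLeq_finite by blast
  then have "ordIso2 (card_of K) (card_of (K \<times> Rs))"
    using card_of_Times_infinite_simps(2) assms(3) True by metis
  moreover have "ordIso2 (card_of K') (card_of K)" using assms(1) True unfolding has_width_def by blast
  ultimately show ?thesis using ordIso_transitive by blast
next
  case False
  then have le: "ordLeq2 (card_of K) (card_of Rs)"
    using ordLeq_total[OF card_of_Well_order card_of_Well_order] by blast
  then have "infinite Rs" using assms(4) card_of_ordLeq_finite by blast
  then have "ordIso2 (card_of Rs) (card_of (K \<times> Rs))"
    using card_of_Times_infinite_simps(4) assms(2) le by metis
  moreover have "ordIso2 (card_of K') (card_of Rs)" using assms(1) le unfolding has_width_def by blast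
  ultimately show ?thesis using ordIso_transitive by blast
qed

theorem mainTheorem14:
  fixes lam :: "'a rel" and I :: "'a set" and K :: "'k set"
    and Rs :: "(('a \<times> 'k) rel) set" and K' :: "'c set"
  assumes "Card_order lam" and "regularCard lam"
    and "ordLess2 (card_of (UNIV :: nat set)) lam"
    and "lambda_system lam I K Rs"
    and "\<not> has_cofinal_branch lam I K Rs"
    and "has_width K Rs K'"
  shows "\<exists>R'. lambda_system lam I K' {R'} \<and> \<not> has_cofinal_branch lam I K' {R'}"
proof -
  note sys = assms(4)
  have inf: "infinite (Field lam)"
    using ordLess_ordIso_trans[OF assms(3) ordIso_symmetric[OF card_of_Field_ordIso[OF assms(1)]]]
    by (simp add: infinite_iff_card_of_nat ordLess_imp_ordLeq)
  have "infinite K \<or> infinite Rs"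
    using finite_lambda_system_has_cofinal_branch[OF assms(1) inf sys] assms(5) by blast
  with assms(6) lambda_systemD(2,4)[OF sys] have "ordIso2 (card_of K') (card_of (K \<times> Rs))"
    by (rule has_width_infinite_ordIso_Times)
  then obtain g where g: "bij_betw g K' (K \<times> Rs)" using card_of_ordIso by blast
  have "ordLess2 (card_of K') lam"
    using has_width_ordLess[OF assms(6) lambda_systemD(3,5)[OF sys]] .
  with card_order_on_well_order_on[OF assms(1)]
  have "lambda_system lam I K' {disjoint_sum_rel g K'}"
    by (rule lambda_system_disjoint_sum_rel[OF inf _ sys g])
  moreover have "\<not> has_cofinal_branch lam I K' {disjoint_sum_rel g K'}"
    using cofinal_branch_disjoint_sum_rel[OF infinite_imp_nonempty[OF inf] g] assms(5)
    unfolding has_cofinal_branch_def by blast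
  ultimately show ?thesis by blast
qed

end
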